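(* Let $n\ge1$ and $\alpha=\beta=1$. The stationary measure of the $n$-site open-boundary TASEP is given by $$\mathbb{P}^{\mathrm{st}}_n\{\mathcal{C}\}=\frac{|R^{-1}\{\mathcal{C}\}|}{|\mathcal{T}_n|}.$$ Equivalently, for every $\mathcal{C}\in\{\bullet,\circ\}^n$, $$|R^{-1}\{\mathcal{C}\}|\sum_{\mathcal{C}'}W(\mathcal{C}\to\mathcal{C}')=\sum_{\mathcal{C}'}|R^{-1}\{\mathcal{C}'\}|\,W(\mathcal{C}'\to\mathcal{C}).$$
   Context: Open-boundary TASEP on $n$ sites: this is the continuous-time Markov chain on $\{\bullet,\circ\}^n$ (strings of length $n$, where $\bullet$ denotes a particle and $\circ$ a hole). Its transition rates are as follows, with $\mathcal{A},\mathcal{A}'$ arbitrary strings: - $W(\circ\mathcal{A}\to\bullet\mathcal{A})=\alpha$; - $W(\mathcal{A}\bullet\to\mathcal{A}\circ)=\beta$; - $W(\mathcal{A}\bullet\circ\mathcal{A}'\to\mathcal{A}\circ\bullet\mathcal{A}')=1$; - $W(\mathcal{C}\to\mathcal{C}')=0$ for all other pairs. A plane binary tree is a finite rooted tree in which every vertex is either an endpoint (a leaf, with no children) or has exactly two children, an ordered left child and right child. Every non-root vertex is thus either a left descendent or a right descendent of its parent. The endpoints are ordered from left to right in the planar order. $\mathcal{T}_n$ denotes the set of plane binary trees with exactly $n+2$ endpoints. The reduced configuration of $T\in\mathcal{T}_n$ is $R(T)=(t_1,\dots,t_n)\in\{\bullet,\circ\}^n$. Here $t_k=\bullet$ if the $(k+1)$-th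 endpoint from the left is a left child, and $t_k=\circ$ if it is a right child. The leftmost and rightmost endpoints are ignored. *)

theory Defs
  imports Complex_Main
begin

text \<open>Configurations of the n-site TASEP: lists of booleans of length n,
  True = particle (bullet), False = hole (circ).\<close>

type_synonym config = "bool list"

definition W :: "real \<Rightarrow> real \<Rightarrow> config \<Rightarrow> config \<Rightarrow> real" where
  "W \<alpha> \<beta> C C' =
     (if C \<noteq> [] \<and> C' \<noteq> [] \<and> hd C = False \<and> C' = True # tl C then \<alpha> else 0)
   + (if C \<noteq> [] \<and> C' \<noteq> [] \<and> last C = True \<and> C' = butlast C @ [False] then \<beta> else 0)
   + (if \<exists>A A'. C = A @ [True, False] @ A' \<and> C' = A @ [False, True] @ A' then 1 else 0)"

datatype ptree = Leaf | Node ptree ptree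

text \<open>Endpoints from left to right, each tagged with True iff it is a left child
  (the flag passed in is the tag of the current vertex; the root gets an arbitrary tag).\<close>
fun leaf_tags :: "bool \<Rightarrow> ptree \<Rightarrow> bool list" where
  "leaf_tags b Leaf = [b]"
| "leaf_tags b (Node l r) = leaf_tags True l @ leaf_tags False r"

definition num_leaves :: "ptree \<Rightarrow> nat" where
  "num_leaves t = length (leaf_tags False t)"

definition trees :: "nat \<Rightarrow> ptree set" where
  "trees n = {t. num_leaves t = n + 2}"

definition reduced :: "ptree \<Rightarrow> config" where
  "reduced t = butlast (tl (leaf_tags False t))"

definition configs :: "nat \<Rightarrow> config set" where
  "configs n = {C. length C = n}"

definition preimage_count :: "nat \<Rightarrow> config \<Rightarrow> nat" where
  "preimage_count n C = card {t \<in> trees n. reduced t = C}"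

end

theory Submission
  imports Defs
begin

text \<open>
  For a word C over {particle, hole} let N C be the number of plane binary
  trees whose left-to-right endpoint tags are True # C @ [False]; every tree with at least
  two endpoints has such a tag word, so N C is exactly the preimage count of C.
  Replacing the k-th endpoint of a tree by a cherry (a vertex with two leaf children)
  turns its tag at position k into the pair True, False, and this operation is a bijection
  onto the trees having that pair at positions k, k+1.  This yields the recursions
    N (A @ [True, False] @ B) = N (A @ [True] @ B) + N (A @ [False] @ B),
    N (False # B) = N B,      N (A @ [True]) = N A.
  With the potential p i = (+/-1) * N (C with letter i deleted), sign + for a particle, these
  recursions say that the net probability flux (inflow minus outflow) through bond (i, i+1)
  equals p (i+1) - p i, through the left boundary equals p 0 and through the right boundary
  equals -p (n-1).  The total net flux therefore telescopes to zero, which is the balance equation.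
\<close>

section \<open>Endpoint tags of plane binary trees\<close>

fun leaves :: "ptree \<Rightarrow> nat" where
  "leaves Leaf = 1"
| "leaves (Node l r) = leaves l + leaves r"

lemma length_leaf_tags: "length (leaf_tags b t) = leaves t"
  by (induction t arbitrary: b) auto

lemma leaves_pos: "leaves t > 0"
  by (induction t) auto

lemma leaf_tags_nonempty: "leaf_tags b t \<noteq> []"
  using length_leaf_tags[of b t] leaves_pos[of t] by auto

lemma hd_leaf_tags_left: "hd (leaf_tags True t) = True"
  by (induction t) (auto simp: leaf_tags_nonempty)

lemma last_leaf_tags_right: "last (leaf_tags False t) = False"
  by (induction t) (auto simp: leaf_tags_nonempty)

lemma leaf_tags_Node: "\<exists>xs. leaf_tags b (Node l r) = True # xs @ [False]"
proof -
  obtain xs where l: "leaf_tags True l = True # xs"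
    using leaf_tags_nonempty[of True l] hd_leaf_tags_left[of l]
    by (cases "leaf_tags True l") auto
  obtain ys where r: "leaf_tags False r = ys @ [False]"
    using leaf_tags_nonempty[of False r] last_leaf_tags_right[of r]
    by (cases "leaf_tags False r" rule: rev_cases) auto
  show ?thesis using l r by auto
qed

lemma finite_trees_leaves_le: "finite {t. leaves t \<le> m}"
proof (induction m)
  case 0
  have "{t. leaves t \<le> 0} = {}"
    using leaves_pos by (metis (mono_tags) empty_Collect_eq le_zero_eq not_gr0)
  then show ?case by (metis finite.emptyI)
next
  case (Suc m)
  let ?small = "{t. leaves t \<le> m}"
  have "{t. leaves t \<le> Suc m} \<subseteq> insert Leaf (case_prod Node ` (?small \<times> ?small))"
  proof
    fix t assume "t \<in> {t. leaves t \<le> Suc m}"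
    then show "t \<in> insert Leaf (case_prod Node ` (?small \<times> ?small))"
    proof (cases t)
      case (Node l r)
      then have "leaves l \<le> m" "leaves r \<le> m"
        using \<open>t \<in> _\<close> leaves_pos[of l] leaves_pos[of r] by auto
      then show ?thesis using Node by (auto intro!: image_eqI[where x = "(l, r)"])
    qed simp
  qed
  then show ?case using Suc by (meson finite_SigmaI finite_imageI finite_insert finite_subset)
qed

lemma finite_trees_with_tags: "finite {t. leaf_tags b t = w}"
  by (rule finite_subset[OF _ finite_trees_leaves_le[of "length w"]]) (auto simp: length_leaf_tags)

section \<open>Growing and pruning cherries\<close>

text \<open>expand k t replaces the k-th endpoint (counted from 0) of t by a cherry;
  contract k undoes this.\<close>

fun expand :: "nat \<Rightarrow> ptree \<Rightarrow> ptree" where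
  "expand k Leaf = Node Leaf Leaf"
| "expand k (Node l r) =
     (if k < leaves l then Node (expand k l) r else Node l (expand (k - leaves l) r))"

fun contract :: "nat \<Rightarrow> ptree \<Rightarrow> ptree" where
  "contract k Leaf = Leaf"
| "contract k (Node l r) =
     (if l = Leaf \<and> r = Leaf \<and> k = 0 then Leaf
      else if k < leaves l then Node (contract k l) r else Node l (contract (k - leaves l) r))"

lemma expand_not_Leaf: "expand k t \<noteq> Leaf"
  by (cases t) auto

lemma leaves_expand: "leaves (expand k t) = Suc (leaves t)"
  by (induction k t rule: expand.induct) auto

lemma leaf_tags_expand:
  "k < leaves t \<Longrightarrow>
   leaf_tags b (expand k t) = take k (leaf_tags b t) @ [True, False] @ drop (Suc k) (leaf_tags b t)"
proof (induction k t arbitrary: b rule: expand.induct)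
  case (1 k)
  then show ?case by simp
next
  case (2 k l r)
  then show ?case
    by (cases "k < leaves l") (simp_all add: length_leaf_tags Suc_diff_le)
qed

lemma contract_expand: "k < leaves t \<Longrightarrow> contract k (expand k t) = t"
  by (induction k t rule: expand.induct) (auto simp: expand_not_Leaf leaves_expand)

text \<open>Conversely, endpoints k, k+1 tagged True, False are the two leaves of a cherry:
  a left-child endpoint followed by a right-child endpoint must be siblings.\<close>

lemma expand_contract:
  assumes "Suc k < length (leaf_tags b s)"
    and "leaf_tags b s ! k = True" and "leaf_tags b s ! Suc k = False"
  shows "k < leaves (contract k s) \<and> expand k (contract k s) = s"
  using assms
proof (induction k s arbitrary: b rule: contract.induct)
  case (1 k)
  then show ?case by simp
next
  case (2 k l r)
  show ?case
  proof (cases "l = Leaf \<and> r = Leaf \<and> k = 0")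
    case True
    then show ?thesis by simp
  next
    case not_cherry: False
    consider "Suc k < leaves l" | "Suc k = leaves l" | "leaves l \<le> k" by linarith
    then show ?thesis
    proof cases
      case 1
      then have "k < leaves (contract k l) \<and> expand k (contract k l) = l"
        using "2.IH"(1)[of True] not_cherry "2.prems" by (simp add: length_leaf_tags nth_append)
      then show ?thesis using not_cherry 1 by simp
    next
      case 2
      have "last (leaf_tags True l) = True"
        using "2.prems"(2) 2[symmetric] by (simp add: nth_append length_leaf_tags last_conv_nth leaf_tags_nonempty)
      then have "l = Leaf"
        using last_leaf_tags_right by (cases l) (auto simp: leaf_tags_nonempty)
      moreover have "hd (leaf_tags False r) = False"
        using "2.prems"(3) 2 by (simp add: nth_append length_leaf_tags hd_conv_nth leaf_tags_nonempty)
      then have "r = Leaf"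
        using hd_leaf_tags_left by (cases r) (auto simp: leaf_tags_nonempty)
      ultimately show ?thesis using 2 not_cherry by simp
    next
      case 3
      then have "k - leaves l < leaves (contract (k - leaves l) r)
               \<and> expand (k - leaves l) (contract (k - leaves l) r) = r"
        using "2.IH"(2)[of False] not_cherry "2.prems"
        by (simp add: length_leaf_tags nth_append Suc_diff_le)
      moreover from this have "k < leaves l + leaves (contract (k - leaves l) r)" by linarith
      ultimately show ?thesis using not_cherry 3 by simp
    qed
  qed
qed

section \<open>Counting trees by tag word\<close>

definition tree_count :: "bool list \<Rightarrow> nat" where
  "tree_count w = card {t. leaf_tags False t = w}"

lemma tree_count_cherry:
  "tree_count (X @ [True, False] @ Y) = tree_count (X @ [True] @ Y) + tree_count (X @ [False] @ Y)"
proof -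
  define k where "k = length X"
  define S where "S = {t. leaf_tags False t = X @ [True] @ Y} \<union> {t. leaf_tags False t = X @ [False] @ Y}"
  have S_iff: "t \<in> S \<longleftrightarrow> k < leaves t \<and> take k (leaf_tags False t) = X
                          \<and> drop (Suc k) (leaf_tags False t) = Y" for t
  proof
    assume "t \<in> S"
    then obtain c where w: "leaf_tags False t = X @ [c] @ Y" unfolding S_def by blast
    moreover have "leaves t = length (X @ [c] @ Y)"
      using w length_leaf_tags by metis
    ultimately show "k < leaves t \<and> take k (leaf_tags False t) = X \<and> drop (Suc k) (leaf_tags False t) = Y"
      by (simp add: k_def)
  next
    assume "k < leaves t \<and> take k (leaf_tags False t) = X \<and> drop (Suc k) (leaf_tags False t) = Y"
    then have "leaf_tags False t = X @ [leaf_tags False t ! k] @ Y"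
      using id_take_nth_drop[of k "leaf_tags False t"] by (simp add: length_leaf_tags)
    then show "t \<in> S" unfolding S_def by (cases "leaf_tags False t ! k") auto
  qed
  have image: "{s. leaf_tags False s = X @ [True, False] @ Y} = expand k ` S"
  proof (intro set_eqI iffI)
    fix s assume "s \<in> {s. leaf_tags False s = X @ [True, False] @ Y}"
    then have w: "leaf_tags False s = X @ [True, False] @ Y" by simp
    then have c: "k < leaves (contract k s) \<and> expand k (contract k s) = s"
      by (intro expand_contract[of _ False]) (simp_all add: nth_append k_def)
    define t where "t = contract k s"
    have "take k (leaf_tags False t) @ [True, False] @ drop (Suc k) (leaf_tags False t) = X @ [True, False] @ Y"
      using w c leaf_tags_expand[of k t False] by (simp add: t_def)
    moreover have "length (take k (leaf_tags False t)) = length X"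
      using c by (simp add: t_def k_def length_leaf_tags)
    ultimately have "t \<in> S"
      using c by (simp add: S_iff t_def)
    then show "s \<in> expand k ` S" using c t_def by (metis image_eqI)
  next
    fix s assume "s \<in> expand k ` S"
    then obtain t where "t \<in> S" "s = expand k t" by blast
    then show "s \<in> {s. leaf_tags False s = X @ [True, False] @ Y}"
      using leaf_tags_expand[of k t False] by (simp add: S_iff)
  qed
  have "inj_on (expand k) S"
    by (rule inj_on_inverseI[where g = "contract k"]) (simp add: contract_expand S_iff)
  moreover have "card S = tree_count (X @ [True] @ Y) + tree_count (X @ [False] @ Y)"
    unfolding S_def tree_count_def by (rule card_Un_disjoint) (auto simp: finite_trees_with_tags)
  ultimately show ?thesis
    unfolding tree_count_def image by (simp add: card_image)
qed

definition N :: "config \<Rightarrow> nat" where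
  "N C = tree_count (True # C @ [False])"

lemma N_cherry: "N (A @ [True, False] @ B) = N (A @ [True] @ B) + N (A @ [False] @ B)"
  using tree_count_cherry[of "True # A" "B @ [False]"] unfolding N_def by simp

text \<open>No tag word of length at least two starts with False or ends with True, so at the
  boundaries the cherry recursion loses one of its two terms.\<close>

lemma leaf_tags_boundary:
  "leaf_tags False t \<noteq> False # u @ [False] \<and> leaf_tags False t \<noteq> True # u @ [True]"
proof (cases t)
  case (Node l r)
  then obtain xs where "leaf_tags False t = True # xs @ [False]"
    using leaf_tags_Node by blast
  then show ?thesis by auto
qed simp

lemma N_hole_first: "N (False # B) = N B"
proof -
  have "tree_count ([] @ [False] @ B @ [False]) = 0"
    by (simp add: tree_count_def leaf_tags_boundary)
  then show ?thesis using tree_count_cherry[of "[]" "B @ [False]"] unfolding N_def by simp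
qed

lemma N_particle_last: "N (A @ [True]) = N A"
proof -
  have "tree_count ((True # A) @ [True] @ []) = 0"
    by (simp add: tree_count_def leaf_tags_boundary)
  then show ?thesis using tree_count_cherry[of "True # A" "[]"] unfolding N_def by simp
qed

lemma preimage_count_eq_N:
  assumes "length C = n"
  shows "preimage_count n C = N C"
proof -
  have "{t \<in> trees n. reduced t = C} = {t. leaf_tags False t = True # C @ [False]}"
  proof (intro set_eqI iffI)
    fix t assume t: "t \<in> {t \<in> trees n. reduced t = C}"
    then obtain l r where "t = Node l r"
      by (cases t) (auto simp: trees_def num_leaves_def)
    then obtain xs where "leaf_tags False t = True # xs @ [False]"
      using leaf_tags_Node by blast
    then show "t \<in> {t. leaf_tags False t = True # C @ [False]}"
      using t by (simp add: reduced_def)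
  qed (use assms in \<open>simp add: reduced_def trees_def num_leaves_def\<close>)
  then show ?thesis by (simp add: preimage_count_def N_def tree_count_def)
qed

section \<open>Rate sums over configurations\<close>

lemma finite_configs: "finite (configs n)"
proof -
  have "configs n = {xs. set xs \<subseteq> (UNIV :: bool set) \<and> length xs = n}"
    by (auto simp: configs_def)
  then show ?thesis using finite_lists_length_eq[of "UNIV :: bool set" n] by simp
qed

lemma sum_configs_single:
  fixes g :: "config \<Rightarrow> real"
  assumes "length D = n" and "\<And>C'. length C' = n \<Longrightarrow> Q C' \<longleftrightarrow> C' = D \<and> P"
  shows "(\<Sum>C'\<in>configs n. if Q C' then g C' else 0) = (if P then g D else 0)"
proof -
  have "(\<Sum>C'\<in>configs n. if Q C' then g C' else 0) = (\<Sum>C'\<in>configs n. if C' = D \<and> P then g C' else 0)"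
    by (rule sum.cong) (auto simp: configs_def assms(2))
  also have "\<dots> = (if P then g D else 0)"
    using assms(1) sum.delta[OF finite_configs[of n], where a = D and b = g] by (simp add: configs_def)
  finally show ?thesis .
qed

definition swap_at :: "nat \<Rightarrow> config \<Rightarrow> config" where
  "swap_at i C = take i C @ [C ! Suc i, C ! i] @ drop (Suc (Suc i)) C"

lemma split_at_bond: "Suc i < length C \<Longrightarrow> C = take i C @ [C ! i, C ! Suc i] @ drop (Suc (Suc i)) C"
  by (metis Cons_nth_drop_Suc Suc_lessD append_Cons append_Nil append_take_drop_id)

lemma sum_configs_swaps:
  fixes g :: "config \<Rightarrow> real"
  assumes "x \<noteq> y" and "length C = n"
  shows "(\<Sum>C'\<in>configs n. if \<exists>A A'. C = A @ [x, y] @ A' \<and> C' = A @ [y, x] @ A' then g C' else 0)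
       = (\<Sum>i<n-1. if C ! i = x \<and> C ! Suc i = y then g (swap_at i C) else 0)"
proof -
  define I where "I = {i \<in> {..<n-1}. C ! i = x \<and> C ! Suc i = y}"
  have swap_I: "swap_at i C = take i C @ [y, x] @ drop (Suc (Suc i)) C" if "i \<in> I" for i
    using that by (simp add: I_def swap_at_def)
  have reachable: "(\<exists>A A'. C = A @ [x, y] @ A' \<and> C' = A @ [y, x] @ A') \<longleftrightarrow> C' \<in> (\<lambda>i. swap_at i C) ` I" for C'
  proof
    assume "\<exists>A A'. C = A @ [x, y] @ A' \<and> C' = A @ [y, x] @ A'"
    then obtain A A' where C: "C = A @ [x, y] @ A'" and C': "C' = A @ [y, x] @ A'" by blast
    have "length A \<in> I" using C assms(2) by (auto simp: I_def nth_append)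
    moreover have "C' = swap_at (length A) C" using C C' by (simp add: swap_at_def nth_append)
    ultimately show "C' \<in> (\<lambda>i. swap_at i C) ` I" by blast
  next
    assume "C' \<in> (\<lambda>i. swap_at i C) ` I"
    then obtain i where i: "i \<in> I" "C' = swap_at i C" by blast
    then have "C = take i C @ [x, y] @ drop (Suc (Suc i)) C"
      using split_at_bond[of i C] assms(2) by (auto simp: I_def)
    then show "\<exists>A A'. C = A @ [x, y] @ A' \<and> C' = A @ [y, x] @ A'" using i swap_I by blast
  qed
  text \<open>The swap at bond i is the first position where swap_at i C differs from C.\<close>
  have inj: "inj_on (\<lambda>i. swap_at i C) I"
  proof (rule inj_onI, rule ccontr)
    fix i j assume ij: "i \<in> I" "j \<in> I" "swap_at i C = swap_at j C" "i \<noteq> j"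
    have at_swap: "swap_at a C ! a = y" if "a \<in> I" for a
      using that assms(2) by (auto simp: swap_I I_def nth_append)
    have before_swap: "swap_at b C ! a = x" if "a \<in> I" "b \<in> I" "a < b" for a b
      using that assms(2) by (auto simp: swap_I I_def nth_append)
    show False
      using ij at_swap before_swap assms(1) by (metis linorder_neqE_nat)
  qed
  have "(\<Sum>C'\<in>configs n. if \<exists>A A'. C = A @ [x, y] @ A' \<and> C' = A @ [y, x] @ A' then g C' else 0)
      = sum g (configs n \<inter> (\<lambda>i. swap_at i C) ` I)"
    unfolding reachable by (rule sum.inter_restrict[symmetric, OF finite_configs])
  also have "\<dots> = sum g ((\<lambda>i. swap_at i C) ` I)"
    using assms(2) by (intro arg_cong[where f = "sum g"]) (auto simp: swap_at_def I_def configs_def)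
  also have "\<dots> = (\<Sum>i\<in>I. g (swap_at i C))" by (simp add: sum.reindex[OF inj])
  also have "\<dots> = (\<Sum>i<n-1. if C ! i = x \<and> C ! Suc i = y then g (swap_at i C) else 0)"
    unfolding I_def by (rule sum.inter_filter) simp
  finally show ?thesis .
qed

lemma weighted_W:
  "c * W 1 1 D D' =
     (if D \<noteq> [] \<and> D' \<noteq> [] \<and> hd D = False \<and> D' = True # tl D then c else 0)
   + (if D \<noteq> [] \<and> D' \<noteq> [] \<and> last D = True \<and> D' = butlast D @ [False] then c else 0)
   + (if \<exists>A A'. D = A @ [True, False] @ A' \<and> D' = A @ [False, True] @ A' then c else 0)"
  unfolding W_def distrib_left by (simp only: if_distrib[of "times c"] mult_1_right mult_zero_right)

lemma exit_rate:
  assumes "length C = n" and "n \<ge> 1"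
  shows "(\<Sum>C'\<in>configs n. W 1 1 C C')
       = (if \<not> hd C then 1 else 0) + (if last C then 1 else 0)
         + (\<Sum>i<n-1. if C ! i \<and> \<not> C ! Suc i then 1 else 0)"
proof -
  have C: "C \<noteq> []" using assms by auto
  have "(\<Sum>C'\<in>configs n. if C \<noteq> [] \<and> C' \<noteq> [] \<and> hd C = False \<and> C' = True # tl C then 1 else 0)
      = (if \<not> hd C then 1 else (0::real))"
    by (rule sum_configs_single[where D = "True # tl C" and g = "\<lambda>_. 1"]) (use assms C in auto)
  moreover have "(\<Sum>C'\<in>configs n. if C \<noteq> [] \<and> C' \<noteq> [] \<and> last C = True \<and> C' = butlast C @ [False] then 1 else 0)
      = (if last C then 1 else (0::real))"
    by (rule sum_configs_single[where D = "butlast C @ [False]" and g = "\<lambda>_. 1"]) (use assms C in auto)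
  moreover have "(\<Sum>C'\<in>configs n. if \<exists>A A'. C = A @ [True, False] @ A' \<and> C' = A @ [False, True] @ A' then 1 else 0)
      = (\<Sum>i<n-1. if C ! i \<and> \<not> C ! Suc i then 1 else (0::real))"
    using sum_configs_swaps[of True False C n "\<lambda>_. 1"] assms(1) by simp
  ultimately show ?thesis
    using weighted_W[of 1 C] by (simp add: sum.distrib)
qed

lemma weighted_inflow:
  fixes g :: "config \<Rightarrow> real"
  assumes "length C = n" and "n \<ge> 1"
  shows "(\<Sum>C'\<in>configs n. g C' * W 1 1 C' C)
       = (if hd C then g (False # tl C) else 0) + (if \<not> last C then g (butlast C @ [True]) else 0)
         + (\<Sum>i<n-1. if \<not> C ! i \<and> C ! Suc i then g (swap_at i C) else 0)"
proof -
  have C: "C \<noteq> []" using assms by auto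
  have "(\<Sum>C'\<in>configs n. if C' \<noteq> [] \<and> C \<noteq> [] \<and> hd C' = False \<and> C = True # tl C' then g C' else 0)
      = (if hd C then g (False # tl C) else 0)"
  proof (rule sum_configs_single[where D = "False # tl C"])
    fix C' :: config assume "length C' = n"
    then show "(C' \<noteq> [] \<and> C \<noteq> [] \<and> hd C' = False \<and> C = True # tl C') \<longleftrightarrow> C' = False # tl C \<and> hd C"
      using assms C by (cases C'; cases C) auto
  qed (use assms C in auto)
  moreover have "(\<Sum>C'\<in>configs n. if C' \<noteq> [] \<and> C \<noteq> [] \<and> last C' = True \<and> C = butlast C' @ [False] then g C' else 0)
      = (if \<not> last C then g (butlast C @ [True]) else 0)"
  proof (rule sum_configs_single[where D = "butlast C @ [True]"])
    fix C' :: config assume "length C' = n"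
    then show "(C' \<noteq> [] \<and> C \<noteq> [] \<and> last C' = True \<and> C = butlast C' @ [False]) \<longleftrightarrow> C' = butlast C @ [True] \<and> \<not> last C"
      using assms C by (cases C' rule: rev_cases; cases C rule: rev_cases) auto
  qed (use assms C in auto)
  moreover have "(\<Sum>C'\<in>configs n. if \<exists>A A'. C' = A @ [True, False] @ A' \<and> C = A @ [False, True] @ A' then g C' else 0)
      = (\<Sum>i<n-1. if \<not> C ! i \<and> C ! Suc i then g (swap_at i C) else 0)"
    using sum_configs_swaps[of False True C n g] assms(1) by (simp add: conj_commute)
  ultimately show ?thesis
    by (simp only: weighted_W sum.distrib)
qed

section \<open>Telescoping the probability flux\<close>

definition potential :: "config \<Rightarrow> nat \<Rightarrow> real" where
  "potential C i = (if C ! i then 1 else -1) * real (N (take i C @ drop (Suc i) C))"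

text \<open>Net flux through the bond (i, i+1): this is the cherry recursion.\<close>

lemma bond_flux:
  assumes "Suc i < length C"
  shows "(if \<not> C ! i \<and> C ! Suc i then real (N (swap_at i C)) else 0)
           - real (N C) * (if C ! i \<and> \<not> C ! Suc i then 1 else 0)
         = potential C (Suc i) - potential C i"
proof -
  obtain A x y B where C: "C = A @ [x, y] @ B" and i: "i = length A"
    using split_at_bond[OF assms] assms by (metis length_take min.absorb4 Suc_lessD)
  show ?thesis
    unfolding C i using N_cherry[of A B]
    by (cases x; cases y) (simp_all add: potential_def swap_at_def nth_append)
qed

text \<open>Net flux through the left and right boundaries: the two boundary recursions.\<close>

lemma left_flux:
  assumes "C \<noteq> []"
  shows "(if hd C then real (N (False # tl C)) else 0) - real (N C) * (if \<not> hd C then 1 else 0)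
       = potential C 0"
proof -
  obtain x B where "C = x # B" using assms by (cases C) auto
  then show ?thesis using N_hole_first[of B] by (cases x) (simp_all add: potential_def)
qed

lemma right_flux:
  assumes "C \<noteq> []"
  shows "(if \<not> last C then real (N (butlast C @ [True])) else 0) - real (N C) * (if last C then 1 else 0)
       = - potential C (length C - 1)"
proof -
  obtain A y where "C = A @ [y]" using assms by (cases C rule: rev_cases) auto
  then show ?thesis using N_particle_last[of A] by (cases y) (simp_all add: potential_def)
qed

text \<open>Summing the local fluxes, the potentials telescope: N is a stationary weight.\<close>

lemma flux_balance:
  assumes "length C = n" and "n \<ge> 1"
  shows "real (N C) * ((if \<not> hd C then 1 else 0) + (if last C then 1 else 0)
                       + (\<Sum>i<n-1. if C ! i \<and> \<not> C ! Suc i then 1 else 0))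
       = (if hd C then real (N (False # tl C)) else 0) + (if \<not> last C then real (N (butlast C @ [True])) else 0)
         + (\<Sum>i<n-1. if \<not> C ! i \<and> C ! Suc i then real (N (swap_at i C)) else 0)"
proof -
  have C: "C \<noteq> []" using assms by auto
  have "(\<Sum>i<n-1. if \<not> C ! i \<and> C ! Suc i then real (N (swap_at i C)) else 0)
         - real (N C) * (\<Sum>i<n-1. if C ! i \<and> \<not> C ! Suc i then 1 else 0)
      = (\<Sum>i<n-1. potential C (Suc i) - potential C i)"
    unfolding sum_distrib_left sum_subtractf[symmetric]
    by (rule sum.cong) (use assms bond_flux in auto)
  also have "\<dots> = potential C (n - 1) - potential C 0"
    by (rule sum_lessThan_telescope)
  finally show ?thesis
    using left_flux[OF C] right_flux[OF C] assms(1) by (simp add: algebra_simps)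
qed

theorem proposition2:
  fixes n :: nat and C :: config
  assumes "n \<ge> 1" and "C \<in> configs n"
  shows "real (preimage_count n C) * (\<Sum>C'\<in>configs n. W 1 1 C C')
       = (\<Sum>C'\<in>configs n. real (preimage_count n C') * W 1 1 C' C)"
proof -
  have len: "length C = n" using assms(2) by (simp add: configs_def)
  have "(\<Sum>C'\<in>configs n. real (preimage_count n C') * W 1 1 C' C)
      = (\<Sum>C'\<in>configs n. real (N C') * W 1 1 C' C)"
    by (rule sum.cong) (simp_all add: configs_def preimage_count_eq_N)
  then show ?thesis
    using flux_balance[OF len assms(1)] exit_rate[OF len assms(1)]
      weighted_inflow[OF len assms(1), of "\<lambda>C'. real (N C')"]
    by (simp add: preimage_count_eq_N[OF len])
qed

end
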